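(* $\mathrm{add}_{\omega}^{*}(\mathcal{S}pl)=\omega_{1}$ and $\mathrm{cof}_{\omega}^{*}(\mathcal{S}pl)=\mathfrak{c}$.
   Context: For an infinite $A\subseteq\omega$, let $S(A)$ be the set of all $\sigma\in2^{<\omega}$ such that $\sigma$ is constant on $A\cap\mathrm{dom}(\sigma)$. The splitting ideal $\mathcal{S}pl$ is the ideal on $2^{<\omega}$ generated by the sets $S(A)$, $A\in[\omega]^{\omega}$. For an ideal $\mathcal{J}$: $\mathrm{add}_{\omega}^*(\mathcal{J})=\min\{|\mathcal{F}|:\mathcal{F}\subseteq\mathcal{J}$ and for every countable $\{X_{n}:n\in\omega\}\subseteq\mathcal{J}$ there is $A\in\mathcal{F}$ with $A\not\subseteq^{*}X_{n}$ for all $n\}$; $\mathrm{cof}_{\omega}^*(\mathcal{J})=\min\{|\mathcal{F}|:\mathcal{F}\subseteq[\mathcal{J}]^{\omega}$ and for every countable $\bar{A}\subseteq\mathcal{J}$ there is $\bar{F}\in\mathcal{F}$ such that every $A\in\bar{A}$ satisfies $A\subseteq^{*}F$ for some $F\in\bar{F}\}$. *)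

theory Defs
  imports Main "HOL-Library.Countable_Set"
begin

text \<open>Finite binary sequences 2^{<omega} are modelled as bool lists; dom(sigma) = {0..<length sigma}.\<close>

definition Sset :: "nat set \<Rightarrow> bool list set" where
  "Sset A = {\<sigma>. \<exists>b. \<forall>i\<in>A. i < length \<sigma> \<longrightarrow> \<sigma> ! i = b}"

definition Spl :: "bool list set set" where
  "Spl = {X. \<exists>G. finite G \<and> (\<forall>A\<in>G. infinite A) \<and> X \<subseteq> \<Union> (Sset ` G)}"

definition almost_subset :: "'a set \<Rightarrow> 'a set \<Rightarrow> bool" where
  "almost_subset X Y \<longleftrightarrow> finite (X - Y)"

text \<open>F witnesses the definition of add*_omega(J).\<close>
definition add_omega_family :: "'a set set \<Rightarrow> 'a set set \<Rightarrow> bool" where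
  "add_omega_family J F \<longleftrightarrow> F \<subseteq> J \<and>
     (\<forall>X :: nat \<Rightarrow> 'a set. (\<forall>n. X n \<in> J) \<longrightarrow> (\<exists>A\<in>F. \<forall>n. \<not> almost_subset A (X n)))"

text \<open>F witnesses the definition of cof*_omega(J); [J]^omega = countably infinite subsets of J.\<close>
definition cof_omega_family :: "'a set set \<Rightarrow> 'a set set set \<Rightarrow> bool" where
  "cof_omega_family J F \<longleftrightarrow> F \<subseteq> {B. B \<subseteq> J \<and> countable B \<and> infinite B} \<and>
     (\<forall>Ab. Ab \<subseteq> J \<and> countable Ab \<longrightarrow> (\<exists>Fb\<in>F. \<forall>A\<in>Ab. \<exists>C\<in>Fb. almost_subset A C))"

end

theory Submission
  imports Defs "HOL-Library.Countable_Set_Type"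
begin

(* Coding 2^{<omega} into omega, the branches b_S through the characteristic functions of the
   sets S \<subseteq> omega form an almost disjoint family of size continuum.  If a finite union
   S(A_1) \<union> ... \<union> S(A_k) almost contains S(B), then some A_i is almost contained in B:
   otherwise pick t_i \<in> A_i - B and u_i \<in> A_i - {t_1, ..., t_k}; the long initial segments
   of the characteristic function of {t_1, ..., t_k} vanish on B but split every A_i.
   So each member of Spl almost contains S(b_S) for only finitely many S, and countably many
   members of Spl take care of only countably many branches.  Hence omega_1 branches witness
   add <= omega_1, and cof >= continuum; the bounds add > omega and cof <= continuum are direct. *)

unbundle cardinal_syntax

lemma subset_imp_almost_subset: "A \<subseteq> B \<Longrightarrow> almost_subset A B"
  unfolding almost_subset_def by (simp add: Diff_eq_empty_iff[THEN iffD2])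

lemma almost_subset_subset_trans: "almost_subset A B \<Longrightarrow> B \<subseteq> C \<Longrightarrow> almost_subset A C"
  unfolding almost_subset_def by (rule finite_subset) auto

definition branch :: "nat set \<Rightarrow> nat set" where
  "branch S = range (\<lambda>n. to_nat (map (\<lambda>i. i \<in> S) [0..<n]))"

lemma characteristic_prefix_eq_iff:
  "map (\<lambda>i. i \<in> S) [0..<n] = map (\<lambda>i. i \<in> T) [0..<m] \<longleftrightarrow> n = m \<and> (\<forall>i<n. i \<in> S \<longleftrightarrow> i \<in> T)"
  by (auto simp: list_eq_iff_nth_eq)

lemma infinite_branch: "infinite (branch S)"
proof -
  have "inj (\<lambda>n. to_nat (map (\<lambda>i. i \<in> S) [0..<n]))"
    by (rule injI) (simp add: characteristic_prefix_eq_iff)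
  then show ?thesis
    unfolding branch_def using finite_imageD by blast
qed

lemma finite_branch_Int:
  assumes "S \<noteq> T" shows "finite (branch S \<inter> branch T)"
proof -
  obtain k where k: "k \<in> S \<longleftrightarrow> k \<notin> T" using assms by blast
  have "branch S \<inter> branch T \<subseteq> (\<lambda>n. to_nat (map (\<lambda>i. i \<in> S) [0..<n])) ` {..k}"
  proof
    fix x assume "x \<in> branch S \<inter> branch T"
    then obtain n where x: "x = to_nat (map (\<lambda>i. i \<in> S) [0..<n])" and "\<forall>i<n. i \<in> S \<longleftrightarrow> i \<in> T"
      by (auto simp: branch_def characteristic_prefix_eq_iff)
    with k have "n \<le> k" using not_le by blast
    with x show "x \<in> (\<lambda>n. to_nat (map (\<lambda>i. i \<in> S) [0..<n])) ` {..k}" by auto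
  qed
  then show ?thesis using finite_subset by blast
qed

lemma finite_branches_almost_containing:
  assumes "infinite A" shows "finite {S. almost_subset A (branch S)}"
proof (cases "\<exists>T. almost_subset A (branch T)")
  case True
  then obtain T where T: "almost_subset A (branch T)" ..
  have "S = T" if S: "almost_subset A (branch S)" for S
  proof (rule ccontr)
    assume "S \<noteq> T"
    have "A \<subseteq> (A - branch S) \<union> (A - branch T) \<union> (branch S \<inter> branch T)" by blast
    with S T finite_branch_Int[OF \<open>S \<noteq> T\<close>] assms show False
      unfolding almost_subset_def using finite_subset by blast
  qed
  then have "{S. almost_subset A (branch S)} \<subseteq> {T}" by blast
  then show ?thesis using finite_subset by blast
qed simp

lemma infinite_Sset_Diff_Union:
  assumes "finite G" and splitting: "\<forall>A\<in>G. infinite (A - B)"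
  shows "infinite (Sset B - \<Union> (Sset ` G))"
proof -
  have "\<forall>A\<in>G. \<exists>x. x \<in> A - B" using splitting by (auto dest: infinite_imp_nonempty)
  then obtain t where t: "\<forall>A\<in>G. t A \<in> A - B" by (auto dest!: bchoice)
  define T where "T = t ` G"
  have "finite T" using \<open>finite G\<close> by (simp add: T_def)
  then have "\<forall>A\<in>G. \<exists>x. x \<in> A - T"
    using splitting by (metis Diff_infinite_finite finite_Diff ex_in_conv finite.emptyI)
  then obtain u where u: "\<forall>A\<in>G. u A \<in> A - T" by (auto dest!: bchoice)
  have "finite (T \<union> u ` G)" using \<open>finite T\<close> \<open>finite G\<close> by simp
  then obtain m where m: "\<forall>x\<in>T \<union> u ` G. x < m" using finite_nat_set_iff_bounded by blast
  define \<sigma> where "\<sigma> n = map (\<lambda>i. i \<in> T) [0..<n]" for n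
  have "\<sigma> n \<in> Sset B - \<Union> (Sset ` G)" if "m \<le> n" for n
  proof -
    have "\<sigma> n \<in> Sset B"
      unfolding Sset_def using t by (auto simp: \<sigma>_def T_def intro!: exI[of _ False])
    moreover have "\<sigma> n \<notin> Sset A" if "A \<in> G" for A
    proof
      assume "\<sigma> n \<in> Sset A"
      then obtain b where b: "\<forall>i\<in>A. i < n \<longrightarrow> \<sigma> n ! i = b" unfolding Sset_def \<sigma>_def by auto
      have "t A < m" "u A < m" using m \<open>A \<in> G\<close> by (auto simp: T_def)
      then have "t A < n" "u A < n" using \<open>m \<le> n\<close> by auto
      moreover have "t A \<in> T" "u A \<notin> T" using u \<open>A \<in> G\<close> by (auto simp: T_def)
      ultimately have "\<sigma> n ! t A \<noteq> \<sigma> n ! u A" by (simp add: \<sigma>_def)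
      moreover have "t A \<in> A" "u A \<in> A" using t u \<open>A \<in> G\<close> by auto
      ultimately show False using b \<open>t A < n\<close> \<open>u A < n\<close> by metis
    qed
    ultimately show ?thesis by blast
  qed
  then have "\<sigma> ` {m..} \<subseteq> Sset B - \<Union> (Sset ` G)" by auto
  moreover have "inj \<sigma>" by (rule injI) (metis \<sigma>_def diff_zero length_map length_upt)
  then have "infinite (\<sigma> ` {m..})"
    by (meson finite_imageD infinite_Ici inj_on_subset subset_UNIV)
  ultimately show ?thesis using finite_subset by blast
qed

lemma almost_subset_Sset_UnionD:
  assumes "finite G" and "almost_subset (Sset B) (\<Union> (Sset ` G))"
  shows "\<exists>A\<in>G. almost_subset A B"
  using infinite_Sset_Diff_Union[OF \<open>finite G\<close>, of B] assms(2)
  unfolding almost_subset_def by blast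

lemma Sset_in_Spl: "infinite A \<Longrightarrow> Sset A \<in> Spl"
  unfolding Spl_def by (intro CollectI exI[of _ "{A}"]) auto

lemma finite_branches_covered:
  assumes "X \<in> Spl" shows "finite {S. almost_subset (Sset (branch S)) X}"
proof -
  obtain G where G: "finite G" "\<forall>A\<in>G. infinite A" "X \<subseteq> \<Union> (Sset ` G)"
    using assms unfolding Spl_def by blast
  have "{S. almost_subset (Sset (branch S)) X} \<subseteq> (\<Union>A\<in>G. {S. almost_subset A (branch S)})"
  proof
    fix S assume "S \<in> {S. almost_subset (Sset (branch S)) X}"
    then have "almost_subset (Sset (branch S)) (\<Union> (Sset ` G))"
      using G(3) almost_subset_subset_trans by blast
    then show "S \<in> (\<Union>A\<in>G. {S. almost_subset A (branch S)})"
      using almost_subset_Sset_UnionD[OF \<open>finite G\<close>] by blast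
  qed
  moreover have "finite (\<Union>A\<in>G. {S. almost_subset A (branch S)})"
    using G finite_branches_almost_containing by blast
  ultimately show ?thesis using finite_subset by blast
qed

lemma uncountable_add_omega_family:
  assumes "J \<noteq> {}" and "add_omega_family J F" shows "uncountable F"
proof
  assume "countable F"
  have FJ: "F \<subseteq> J"
    and add: "\<forall>X :: nat \<Rightarrow> _. (\<forall>n. X n \<in> J) \<longrightarrow> (\<exists>A\<in>F. \<forall>n. \<not> almost_subset A (X n))"
    using assms(2) unfolding add_omega_family_def by auto
  show False
  proof (cases "F = {}")
    case True
    from \<open>J \<noteq> {}\<close> obtain C where "C \<in> J" by blast
    then show False using add[rule_format, of "\<lambda>_. C"] True by blast
  next
    case False
    then have "\<forall>n. from_nat_into F n \<in> J" using from_nat_into FJ by blast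
    then obtain A where "A \<in> F" "\<forall>n. \<not> almost_subset A (from_nat_into F n)"
      using add by blast
    then show False
      using from_nat_into_surj[OF \<open>countable F\<close>] subset_imp_almost_subset by blast
  qed
qed

lemma cardSuc_natLeq_ordLeq_if_uncountable:
  assumes "uncountable A" shows "cardSuc natLeq \<le>o |A|"
proof -
  have "natLeq <o |A|"
    using assms countable_card_le_natLeq not_ordLeq_iff_ordLess natLeq_Well_order
      card_of_Well_order by blast
  then show ?thesis using cardSuc_ordLess_ordLeq natLeq_Card_order card_of_Card_order by blast
qed

lemma uncountable_if_card_of_ordIso_cardSuc_natLeq:
  assumes "|A| =o cardSuc natLeq" shows "uncountable A"
proof
  assume "countable A"
  then have "|A| \<le>o natLeq" using countable_card_le_natLeq by blast
  moreover have "natLeq <o |A|"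
    using ordLess_ordIso_trans[OF cardSuc_greater[OF natLeq_Card_order] ordIso_symmetric[OF assms]] .
  ultimately show False using not_ordLess_ordLeq by blast
qed

lemma uncountable_UNIV_nat_set: "uncountable (UNIV :: nat set set)"
  using card_of_Pow[of "UNIV :: nat set"] countable_card_of_nat not_ordLess_ordLeq by auto

lemma ex_nat_sets_card_of_ordIso_cardSuc_natLeq: "\<exists>W :: nat set set. |W| =o cardSuc natLeq"
proof -
  have Field: "|Field (cardSuc natLeq)| =o cardSuc natLeq"
    by (rule card_of_Field_ordIso[OF cardSuc_Card_order[OF natLeq_Card_order]])
  moreover have "cardSuc natLeq \<le>o |UNIV :: nat set set|"
    by (rule cardSuc_natLeq_ordLeq_if_uncountable[OF uncountable_UNIV_nat_set])
  ultimately have "|Field (cardSuc natLeq)| \<le>o |UNIV :: nat set set|"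
    by (rule ordIso_ordLeq_trans)
  then obtain W :: "nat set set" where W: "|Field (cardSuc natLeq)| =o |W|"
    using internalize_card_of_ordLeq2 by metis
  show ?thesis
    by (rule exI[of _ W], rule ordIso_transitive[OF ordIso_symmetric[OF W] Field])
qed

lemma card_of_UN_countable_ordLeq:
  assumes "infinite I" and "\<forall>i\<in>I. countable (K i)"
  shows "|\<Union>i\<in>I. K i| \<le>o |I|"
proof (rule card_of_UNION_ordLeq_infinite[OF \<open>infinite I\<close>])
  show "|I| \<le>o |I|" by (simp add: ordLeq_refl card_of_Card_order)
  have nat_I: "|UNIV :: nat set| \<le>o |I|" using assms(1) infinite_iff_card_of_nat by blast
  show "\<forall>i\<in>I. |K i| \<le>o |I|"
  proof
    fix i assume "i \<in> I"
    then have "|K i| \<le>o |UNIV :: nat set|" using assms(2) countable_card_of_nat by blast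
    then show "|K i| \<le>o |I|" using nat_I by (rule ordLeq_transitive)
  qed
qed

lemma add_omega_family_Sset_branches:
  assumes "uncountable W" shows "add_omega_family Spl ((\<lambda>S. Sset (branch S)) ` W)"
  unfolding add_omega_family_def
proof (intro conjI allI impI)
  show "(\<lambda>S. Sset (branch S)) ` W \<subseteq> Spl" using Sset_in_Spl[OF infinite_branch] by auto
  fix X :: "nat \<Rightarrow> bool list set" assume "\<forall>n. X n \<in> Spl"
  then have "countable (\<Union>n. {S. almost_subset (Sset (branch S)) (X n)})"
    by (simp add: countable_finite finite_branches_covered)
  then obtain S where "S \<in> W" "S \<notin> (\<Union>n. {S. almost_subset (Sset (branch S)) (X n)})"
    using assms countable_subset subsetI by metis
  then show "\<exists>A\<in>(\<lambda>S. Sset (branch S)) ` W. \<forall>n. \<not> almost_subset A (X n)" by blast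
qed

lemma add_omega_Spl_lower:
  assumes "add_omega_family Spl F" shows "cardSuc natLeq \<le>o |F|"
proof -
  have "Spl \<noteq> {}" using Sset_in_Spl[OF infinite_branch] by blast
  with assms show ?thesis
    using uncountable_add_omega_family cardSuc_natLeq_ordLeq_if_uncountable by blast
qed

lemma add_omega_Spl_upper:
  "\<exists>F. add_omega_family Spl F \<and> |F| =o cardSuc natLeq"
proof -
  obtain W :: "nat set set" where W: "|W| =o cardSuc natLeq"
    using ex_nat_sets_card_of_ordIso_cardSuc_natLeq by blast
  define F where "F = (\<lambda>S. Sset (branch S)) ` W"
  have F: "add_omega_family Spl F"
    unfolding F_def using add_omega_family_Sset_branches uncountable_if_card_of_ordIso_cardSuc_natLeq W
    by blast
  have "|F| \<le>o cardSuc natLeq"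
    unfolding F_def using card_of_image W ordLeq_ordIso_trans by blast
  moreover have "cardSuc natLeq \<le>o |F|" using F by (rule add_omega_Spl_lower)
  ultimately show ?thesis using F ordIso_iff_ordLeq by blast
qed

lemma cof_omega_Spl_lower:
  assumes "cof_omega_family Spl F" shows "|UNIV :: nat set set| \<le>o |F|"
proof -
  define K where "K Fb = (\<Union>C\<in>Fb. {S. almost_subset (Sset (branch S)) C})" for Fb
  have F: "\<forall>Fb\<in>F. Fb \<subseteq> Spl \<and> countable Fb"
    and cof: "\<And>Ab. Ab \<subseteq> Spl \<Longrightarrow> countable Ab \<Longrightarrow> \<exists>Fb\<in>F. \<forall>A\<in>Ab. \<exists>C\<in>Fb. almost_subset A C"
    using assms unfolding cof_omega_family_def by auto
  have countable_K: "\<forall>Fb\<in>F. countable (K Fb)"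
    unfolding K_def using F finite_branches_covered by (blast intro: countable_finite)
  have covered: "UNIV = (\<Union>Fb\<in>F. K Fb)"
  proof -
    have "S \<in> (\<Union>Fb\<in>F. K Fb)" for S
      using cof[of "{Sset (branch S)}"] Sset_in_Spl infinite_branch unfolding K_def by auto
    then show ?thesis by blast
  qed
  have "infinite F"
    using covered countable_K uncountable_UNIV_nat_set countable_finite by (metis countable_UN)
  then show ?thesis using covered card_of_UN_countable_ordLeq countable_K by metis
qed

(* The singletons {True^n} only serve to make the family infinite, as [Spl]^omega demands. *)
definition partial_unions_family :: "(nat \<Rightarrow> nat set) \<Rightarrow> bool list set set" where
  "partial_unions_family a =
     range (\<lambda>n. \<Union> (Sset ` a ` {..<n})) \<union> range (\<lambda>n. {replicate n True})"

lemma partial_unions_family_in_Spl: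
  assumes "\<forall>i. infinite (a i)"
  shows "partial_unions_family a \<in> {B. B \<subseteq> Spl \<and> countable B \<and> infinite B}"
proof -
  have "\<Union> (Sset ` a ` {..<n}) \<in> Spl" for n
    unfolding Spl_def using assms by (intro CollectI exI[of _ "a ` {..<n}"]) auto
  moreover have "{replicate n True} \<in> Spl" for n
    unfolding Spl_def Sset_def by (intro CollectI exI[of _ "{UNIV}"]) auto
  moreover have "inj (\<lambda>n. {replicate n True})"
    by (rule injI) (metis length_replicate singleton_inject)
  then have "infinite (range (\<lambda>n. {replicate n True}))"
    using finite_imageD by blast
  ultimately show ?thesis unfolding partial_unions_family_def by auto
qed

lemma countable_Spl_bounded_by_partial_unions:
  assumes "countable Ab" and "Ab \<subseteq> Spl"
  obtains a :: "nat \<Rightarrow> nat set" where "\<forall>i. infinite (a i)" and "\<forall>X\<in>Ab. \<exists>n. X \<subseteq> \<Union> (Sset ` a ` {..<n})"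
proof -
  have "\<forall>X\<in>Ab. \<exists>G. finite G \<and> (\<forall>A\<in>G. infinite A) \<and> X \<subseteq> \<Union> (Sset ` G)"
    using assms(2) unfolding Spl_def by blast
  then obtain G where G: "\<forall>X\<in>Ab. finite (G X) \<and> (\<forall>A\<in>G X. infinite A) \<and> X \<subseteq> \<Union> (Sset ` G X)"
    by (rule bchoice[elim_format]) blast
  define AA where "AA = insert UNIV (\<Union>X\<in>Ab. G X)"
  have "countable AA"
    unfolding AA_def using assms(1) G by (intro countable_insert countable_UN) (auto intro: countable_finite)
  moreover have "AA \<noteq> {}" unfolding AA_def by blast
  ultimately have range_a: "range (from_nat_into AA) = AA" by simp
  define a where "a = from_nat_into AA"
  show ?thesis
  proof (rule that)
    show "\<forall>i. infinite (a i)"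
    proof
      fix i
      have "a i \<in> AA" using range_a unfolding a_def by blast
      then show "infinite (a i)" using G unfolding AA_def by auto
    qed
    show "\<forall>X\<in>Ab. \<exists>n. X \<subseteq> \<Union> (Sset ` a ` {..<n})"
    proof
      fix X assume "X \<in> Ab"
      have "G X \<subseteq> a ` UNIV" using range_a \<open>X \<in> Ab\<close> unfolding AA_def a_def by blast
      moreover have "finite (G X)" using G \<open>X \<in> Ab\<close> by blast
      ultimately obtain N where "finite N" "G X = a ` N"
        using finite_subset_image by (metis subset_UNIV)
      then have "G X \<subseteq> a ` {..<Suc (Max N)}" by (auto simp: less_Suc_eq_le)
      have "X \<subseteq> \<Union> (Sset ` G X)" using G \<open>X \<in> Ab\<close> by simp
      also have "\<dots> \<subseteq> \<Union> (Sset ` a ` {..<Suc (Max N)})"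
        using \<open>G X \<subseteq> a ` {..<Suc (Max N)}\<close> by (intro Union_mono image_mono)
      finally show "\<exists>n. X \<subseteq> \<Union> (Sset ` a ` {..<n})" ..
    qed
  qed
qed

lemma cof_omega_family_partial_unions:
  "cof_omega_family Spl (partial_unions_family ` {a. \<forall>i. infinite (a i)})"
  unfolding cof_omega_family_def
proof (intro conjI allI impI)
  show "partial_unions_family ` {a. \<forall>i. infinite (a i)} \<subseteq> {B. B \<subseteq> Spl \<and> countable B \<and> infinite B}"
    using partial_unions_family_in_Spl by auto
  fix Ab assume "Ab \<subseteq> Spl \<and> countable Ab"
  then obtain a :: "nat \<Rightarrow> nat set" where a: "\<forall>i. infinite (a i)" "\<forall>X\<in>Ab. \<exists>n. X \<subseteq> \<Union> (Sset ` a ` {..<n})"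
    using countable_Spl_bounded_by_partial_unions by blast
  have "\<exists>C\<in>partial_unions_family a. almost_subset X C" if "X \<in> Ab" for X
  proof -
    obtain n where "X \<subseteq> \<Union> (Sset ` a ` {..<n})" using a(2) \<open>X \<in> Ab\<close> by blast
    then have "almost_subset X (\<Union> (Sset ` a ` {..<n}))" by (rule subset_imp_almost_subset)
    then show ?thesis unfolding partial_unions_family_def by blast
  qed
  then show "\<exists>Fb\<in>partial_unions_family ` {a. \<forall>i. infinite (a i)}. \<forall>X\<in>Ab. \<exists>C\<in>Fb. almost_subset X C"
    using a(1) by blast
qed

lemma card_of_nat_set_sequences: "|UNIV :: (nat \<Rightarrow> nat set) set| \<le>o |UNIV :: nat set set|"
proof -
  have "inj (\<lambda>a :: nat \<Rightarrow> nat set. prod_encode ` Sigma UNIV a)"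
  proof (rule injI)
    fix a b :: "nat \<Rightarrow> nat set"
    assume "prod_encode ` Sigma UNIV a = prod_encode ` Sigma UNIV b"
    then have "Sigma UNIV a = Sigma UNIV b" by (simp add: inj_image_eq_iff inj_prod_encode)
    then show "a = b" by blast
  qed
  then show ?thesis using card_of_ordLeq by blast
qed

lemma cof_omega_Spl_upper:
  "\<exists>F. cof_omega_family Spl F \<and> |F| =o |UNIV :: nat set set|"
proof -
  define F where "F = partial_unions_family ` {a. \<forall>i. infinite (a i)}"
  have F: "cof_omega_family Spl F"
    unfolding F_def by (rule cof_omega_family_partial_unions)
  have "|F| \<le>o |UNIV :: (nat \<Rightarrow> nat set) set|"
    unfolding F_def by (rule ordLeq_transitive[OF card_of_image card_of_mono1[OF subset_UNIV]])
  then have "|F| \<le>o |UNIV :: nat set set|"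
    using card_of_nat_set_sequences by (rule ordLeq_transitive)
  then have "|F| =o |UNIV :: nat set set|"
    using cof_omega_Spl_lower[OF F] by (simp add: ordIso_iff_ordLeq)
  with F show ?thesis by blast
qed

theorem mainTheorem14:
  shows "(\<exists>F. add_omega_family Spl F \<and> (card_of F, cardSuc natLeq) \<in> ordIso)
       \<and> (\<forall>F. add_omega_family Spl F \<longrightarrow> (cardSuc natLeq, card_of F) \<in> ordLeq)
       \<and> (\<exists>F. cof_omega_family Spl F \<and> (card_of F, card_of (UNIV :: nat set set)) \<in> ordIso)
       \<and> (\<forall>F. cof_omega_family Spl F \<longrightarrow> (card_of (UNIV :: nat set set), card_of F) \<in> ordLeq)"
  using add_omega_Spl_upper add_omega_Spl_lower cof_omega_Spl_upper cof_omega_Spl_lower by blast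

end
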